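(* Let $X$ be a finite quasi-metric space, i.e.\ a finite set $X$ with a function $d:X\times X\to[0,\infty)$ such that $d(x,x)=0$, $d(x,z)\le d(x,y)+d(y,z)$ for all $x,y,z$, and $d(x,y)>0$ whenever $x\neq y$ ($d$ need not be symmetric). Then the $X\times X$ matrix $Z_X$ with entries $Z_X(x,y)=q^{d(x,y)}$ is invertible over the field $\mathbb{Q}(q^{\mathbb{R}})$ of generalized rational functions; that is, $X$ has Möbius inversion over $\mathbb{Q}(q^{\mathbb{R}})$.
   Context: The ring $\mathbb{Z}[q^{[0,\infty)}]$ of generalized polynomials consists of finite formal sums $\sum_i a_i q^{\ell_i}$ with $a_i\in\mathbb{Z}$, $\ell_i\in[0,\infty)$, with multiplication determined by $q^{\ell}q^{k}=q^{\ell+k}$; it is an integral domain, and $\mathbb{Q}(q^{\mathbb{R}})$ denotes its field of fractions (quotients of finite sums $\sum a_i q^{\ell_i}$ with $a_i\in\mathbb{Q}$, $\ell_i\in\mathbb{R}$). A finite enriched category $X$ "has Möbius inversion" when its zeta matrix $Z_X$ is invertible; for a quasi-metric space the zeta matrix is $Z_X(x,y)=q^{d(x,y)}$. Matrices are indexed by the finite set $X$ for rows and columns. *)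

theory Defs
  imports "HOL-Analysis.Analysis" "HOL-Library.Poly_Mapping" "HOL-Computational_Algebra.Fraction_Field"
begin

text \<open>Generalized Laurent polynomials: finite formal sums of a_i q^l_i with rational
  coefficients and real exponents, realised as the monoid algebra of (real,+) over rat
  (finitely supported maps real => rat, convolution product).  This is an integral domain;
  its field of fractions is the field Q(q^R) of generalized rational functions.\<close>

type_synonym genpoly = "real \<Rightarrow>\<^sub>0 rat"
type_synonym genrat = "genpoly fract"

definition qpow :: "real \<Rightarrow> genrat" where
  "qpow l = Fract (Poly_Mapping.single l 1) 1"

text \<open>Finite quasi-metric space: the points are the elements of a finite type 'a.\<close>
definition quasi_metric :: "('a \<Rightarrow> 'a \<Rightarrow> real) \<Rightarrow> bool" where
  "quasi_metric d \<longleftrightarrow>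
     (\<forall>x y. 0 \<le> d x y) \<and> (\<forall>x. d x x = 0) \<and>
     (\<forall>x y z. d x z \<le> d x y + d y z) \<and> (\<forall>x y. x \<noteq> y \<longrightarrow> 0 < d x y)"

definition zeta_matrix :: "('a::finite \<Rightarrow> 'a \<Rightarrow> real) \<Rightarrow> genrat ^ 'a ^ 'a" where
  "zeta_matrix d = (\<chi> x y. qpow (d x y))"

end

theory Submission
  imports Defs
begin

text \<open>Expanding the determinant gives
  det Z_X = \<Sum>\<sigma> sign \<sigma> q^(\<Sum>x d(x,\<sigma> x)), a generalized polynomial.
  Since d vanishes on the diagonal and is positive off it, the identity is the only
  permutation with exponent 0, so the coefficient of q^0 is 1 and the determinant is nonzero.\<close>

lemma Fract_sum: "(\<Sum>x\<in>S. Fract (f x) 1) = Fract (\<Sum>x\<in>S. f x) (1::'a::idom)"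
  by (induction S rule: infinite_finite_induct) (simp_all add: Zero_fract_def)

lemma Fract_of_int_eq: "Fract (of_int k) 1 = (of_int k :: 'a::idom fract)"
  by (cases k rule: int_cases2)
     (simp_all add: Fract_of_nat_eq minus_fract[symmetric] del: minus_fract)

lemma Fract_eq_zero_iff: "Fract a (1::'a::idom) = 0 \<longleftrightarrow> a = 0"
  by (simp add: Zero_fract_def eq_fract)

lemma prod_qpow: "(\<Prod>x\<in>S. qpow (f x)) = qpow (\<Sum>x\<in>S. f x)"
  by (induction S rule: infinite_finite_induct)
     (simp_all add: qpow_def mult_single One_fract_def)

lemma of_int_mult_qpow: "of_int c * qpow s = Fract (Poly_Mapping.single s (of_int c)) 1"
proof -
  have "of_int c * qpow s = Fract (of_int c * Poly_Mapping.single s 1) 1"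
    by (simp add: qpow_def Fract_of_int_eq[symmetric])
  also have "of_int c * Poly_Mapping.single s (1::rat)
      = Poly_Mapping.single 0 (of_int c) * Poly_Mapping.single s 1"
    by (simp only: single_of_int)
  also have "\<dots> = Poly_Mapping.single s (of_int c)"
    by (simp add: mult_single del: single_of_int)
  finally show ?thesis .
qed

definition zeta_det_poly :: "('a::finite \<Rightarrow> 'a \<Rightarrow> real) \<Rightarrow> genpoly" where
  "zeta_det_poly d =
     (\<Sum>p | p permutes UNIV. Poly_Mapping.single (\<Sum>x\<in>UNIV. d x (p x)) (of_int (sign p)))"

lemma det_zeta_matrix: "det (zeta_matrix d) = Fract (zeta_det_poly d) 1"
  by (simp add: det_def zeta_matrix_def zeta_det_poly_def prod_qpow of_int_mult_qpow Fract_sum)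

lemma lookup_zeta_det_poly_0:
  fixes d :: "'a::finite \<Rightarrow> 'a \<Rightarrow> real"
  assumes nonneg: "\<And>x y. 0 \<le> d x y" and diag: "\<And>x. d x x = 0"
    and pos: "\<And>x y. x \<noteq> y \<Longrightarrow> 0 < d x y"
  shows "Poly_Mapping.lookup (zeta_det_poly d) 0 = 1"
proof -
  have exponent_pos: "0 < (\<Sum>x\<in>UNIV. d x (p x))" if "p \<noteq> id" for p :: "'a \<Rightarrow> 'a"
  proof -
    obtain x where "p x \<noteq> x" using \<open>p \<noteq> id\<close> by (meson eq_id_iff)
    then show ?thesis by (intro sum_pos2[of UNIV x]) (auto simp: nonneg pos)
  qed
  have coeff_0: "(of_int (sign p) when (\<Sum>x\<in>UNIV. d x (p x)) = 0) = (if p = id then 1 else 0 :: rat)"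
    for p :: "'a \<Rightarrow> 'a"
  proof (cases "p = id")
    case False
    then have "(\<Sum>x\<in>UNIV. d x (p x)) \<noteq> 0" using exponent_pos by (metis less_irrefl)
    then show ?thesis using False by simp
  qed (simp add: diag)
  have "Poly_Mapping.lookup (zeta_det_poly d) 0
      = (\<Sum>p | p permutes (UNIV :: 'a set). if p = id then 1 else 0)"
    unfolding zeta_det_poly_def lookup_sum lookup_single
    by (intro sum.cong) (simp_all add: coeff_0)
  also have "\<dots> = 1"
    by (simp add: finite_permutations)
  finally show ?thesis .
qed

theorem theorem2p10:
  fixes d :: "'a::finite \<Rightarrow> 'a \<Rightarrow> real"
  assumes "quasi_metric d"
  shows "invertible (zeta_matrix d)"
proof -
  have "Poly_Mapping.lookup (zeta_det_poly d) 0 = 1"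
    using assms by (intro lookup_zeta_det_poly_0) (auto simp: quasi_metric_def)
  then have "zeta_det_poly d \<noteq> 0" by auto
  then show ?thesis
    by (simp add: invertible_det_nz det_zeta_matrix Fract_eq_zero_iff)
qed

end
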